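(* Let $K\ge 2$, $0<q<p$ with $p+(K-1)q=1$, and $\phi\in\Delta$. Suppose the smallest entry of $\phi$, say $\phi_m$, satisfies $\phi_m<q$, and the second smallest entry of $\phi$ is at least $\frac{Kq-\phi_m}{K-1}$. Then the three points $\mathrm{InvP}(\phi)$, $\mathrm{MLE}^*(\phi)$, $\mathrm{InvN}(\phi)$ of $\mathbb{R}^K$ are collinear, and $\mathrm{MLE}^*(\phi)$ lies between $\mathrm{InvP}(\phi)$ and $\mathrm{InvN}(\phi)$ (on the segment joining them).
   Context: $\Delta=\{\theta\in\mathbb{R}^K:\theta_i\ge 0,\ \sum_i\theta_i=1\}$. $p,q$ are the parameters of the randomized response mechanism ($p$ = probability of reporting the true value, $q$ = probability of reporting each other value). Estimators: $\mathrm{Inv}(\phi)_i=\frac{\phi_i-q}{p-q}$; $\mathrm{InvN}(\phi)_i=\frac{\max(0,\mathrm{Inv}(\phi)_i)}{\sum_j\max(0,\mathrm{Inv}(\phi)_j)}$; $\mathrm{InvP}(\phi)=\arg\min_{\theta\in\Delta}\|\theta-\mathrm{Inv}(\phi)\|_2$ (Euclidean projection onto $\Delta$). $\mathrm{MLE}^*(\phi)$: for real $\tau$ let $m(\tau)=|\{i:\phi_i<\tau\}|$ and $c_\tau=\frac{1-m(\tau)q}{\sum_{i:\phi_i\ge\tau}\phi_i}$; let $\tau^*$ be the smallest $\tau\in\{\phi_1,\dots,\phi_K\}$ such that $c_\tau\phi_i\ge q$ for all $i$ with $\phi_i\ge\tau$; then $\mathrm{MLE}^*(\phi)_i=0$ if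 $\phi_i<\tau^*$ and $\frac{c_{\tau^*}\phi_i-q}{p-q}$ otherwise. *)

theory Defs
  imports "HOL-Analysis.Analysis"
begin

text \<open>Probability prob_simplex in R^K, with K = CARD('n).\<close>
definition prob_simplex :: "(real^'n) set" where
  "prob_simplex = {\<theta>. (\<forall>i. \<theta>$i \<ge> 0) \<and> (\<Sum>i\<in>UNIV. \<theta>$i) = 1}"

definition Inv :: "real \<Rightarrow> real \<Rightarrow> real^'n \<Rightarrow> real^'n" where
  "Inv p q \<phi> = (\<chi> i. (\<phi>$i - q) / (p - q))"

definition InvN :: "real \<Rightarrow> real \<Rightarrow> real^'n \<Rightarrow> real^'n" where
  "InvN p q \<phi> = (\<chi> i. max 0 (Inv p q \<phi> $ i) / (\<Sum>j\<in>UNIV. max 0 (Inv p q \<phi> $ j)))"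

definition InvP :: "real \<Rightarrow> real \<Rightarrow> real^'n \<Rightarrow> real^'n" where
  "InvP p q \<phi> = closest_point prob_simplex (Inv p q \<phi>)"

definition mcount :: "real^'n \<Rightarrow> real \<Rightarrow> nat" where
  "mcount \<phi> \<tau> = card {i. \<phi>$i < \<tau>}"

definition cfac :: "real \<Rightarrow> real^'n \<Rightarrow> real \<Rightarrow> real" where
  "cfac q \<phi> \<tau> = (1 - real (mcount \<phi> \<tau>) * q) / (\<Sum>i\<in>{i. \<phi>$i \<ge> \<tau>}. \<phi>$i)"

definition tau_star :: "real \<Rightarrow> real^'n \<Rightarrow> real" where
  "tau_star q \<phi> = Min {\<tau> \<in> range (\<lambda>i. \<phi>$i). \<forall>i. \<phi>$i \<ge> \<tau> \<longrightarrow> cfac q \<phi> \<tau> * \<phi>$i \<ge> q}"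

definition MLE_star :: "real \<Rightarrow> real \<Rightarrow> real^'n \<Rightarrow> real^'n" where
  "MLE_star p q \<phi> = (\<chi> i. if \<phi>$i < tau_star q \<phi> then 0
       else (cfac q \<phi> (tau_star q \<phi>) * \<phi>$i - q) / (p - q))"

end

theory Submission
  imports Defs
begin

text \<open>Under these hypotheses \<open>\<phi>$m\<close> is the only entry below \<open>q\<close>, so all three
  estimators vanish at \<open>m\<close> and are affine in \<open>\<phi>$i\<close> at every other coordinate:
  \<open>InvN\<close> normalises the excesses \<open>\<phi>$i - q\<close>, \<open>MLE_star\<close> has threshold the second
  smallest entry and scales by \<open>(1 - q) / (1 - \<phi>$m)\<close>, and \<open>InvP\<close> is \<open>Inv\<close> shifted by
  a constant and truncated at zero, since the projection onto the simplex is of this form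
  whenever the result has mass one. Comparing the three affine maps gives
  \<open>MLE_star = (1 - t) InvP + t InvN\<close> with \<open>t = (1 - \<phi>$m - (K - 1) q) / (1 - \<phi>$m)\<close>,
  and \<open>0 \<le> t \<le> 1\<close>.\<close>

lemma closest_point_eqI:
  fixes a x :: "'a::{real_inner,heine_borel}"
  assumes "convex S" "closed S" "x \<in> S" "\<forall>z\<in>S. inner (a - x) (z - x) \<le> 0"
  shows "closest_point S a = x"
proof -
  have "dist a x \<le> dist a z" if "z \<in> S" for z
  proof -
    have "inner (a - x) (z - x) \<le> 0"
      using assms(4) that by blast
    then have "0 \<le> (norm (z - x))\<^sup>2 - 2 * inner (a - x) (z - x)"
      using zero_le_power2[of "norm (z - x)"] by linarith
    then have "(dist a x)\<^sup>2 \<le> (dist a x)\<^sup>2 + ((norm (z - x))\<^sup>2 - 2 * inner (a - x) (z - x))"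
      by simp
    also have "\<dots> = (dist a z)\<^sup>2"
      by (simp add: dist_norm power2_norm_eq_inner inner_diff_right inner_commute
          algebra_simps)
    finally show ?thesis
      by (rule power2_le_imp_le) simp
  qed
  then show ?thesis
    using closest_point_unique[OF assms(1-3)] by simp
qed

lemma closed_prob_simplex: "closed (prob_simplex :: (real^'n) set)"
proof -
  have "prob_simplex = (\<Inter>i. {x::real^'n. x$i \<ge> 0}) \<inter> {x. (\<Sum>i\<in>UNIV. x$i) = 1}"
    by (auto simp: prob_simplex_def)
  moreover have "closed {x::real^'n. (\<Sum>i\<in>UNIV. x$i) = 1}"
    by (intro closed_Collect_eq continuous_intros)
  ultimately show ?thesis
    by (metis closed_INT closed_Int closed_halfspace_component_ge_cart)
qed

lemma convex_prob_simplex: "convex (prob_simplex :: (real^'n) set)"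
  unfolding convex_def prob_simplex_def
  by (auto simp: sum.distrib sum_distrib_left[symmetric])

text \<open>Each coordinate of \<open>v - P\<close> is \<open>-s\<close> where \<open>P\<close> is positive and at most \<open>-s\<close>
  where \<open>P\<close> vanishes; paired with \<open>z - P\<close> this is the variational inequality.\<close>
lemma closest_point_prob_simplex:
  fixes v :: "real^'n"
  assumes "(\<Sum>i\<in>UNIV. max 0 (v$i + s)) = 1"
  shows "closest_point prob_simplex v = (\<chi> i. max 0 (v$i + s))"
proof -
  define P :: "real^'n" where "P = (\<chi> i. max 0 (v$i + s))"
  have P_simplex: "P \<in> prob_simplex"
    using assms by (simp add: P_def prob_simplex_def)
  have "inner (v - P) (z - P) \<le> 0" if z: "z \<in> prob_simplex" for z
  proof -
    have "(v$i - P$i) * (z$i - P$i) \<le> s * (P$i - z$i)" for i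
    proof (cases "v$i + s \<ge> 0")
      case False
      then have "v$i * z$i \<le> - s * z$i"
        using z by (intro mult_right_mono) (auto simp: prob_simplex_def)
      with False show ?thesis by (simp add: P_def)
    qed (simp add: P_def algebra_simps)
    then have "inner (v - P) (z - P) \<le> (\<Sum>i\<in>UNIV. s * (P$i - z$i))"
      unfolding inner_vec_def by (intro sum_mono) simp
    also have "\<dots> = s * ((\<Sum>i\<in>UNIV. P$i) - (\<Sum>i\<in>UNIV. z$i))"
      by (simp add: right_diff_distrib sum_distrib_left sum_subtractf)
    also have "\<dots> = 0"
      using z P_simplex by (simp add: prob_simplex_def)
    finally show ?thesis .
  qed
  then have "closest_point prob_simplex v = P"
    by (blast intro: closest_point_eqI[OF convex_prob_simplex closed_prob_simplex P_simplex])
  then show ?thesis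
    by (simp only: P_def)
qed

lemma InvN_altdef:
  fixes \<phi> :: "real^'n"
  assumes "q < p"
  shows "InvN p q \<phi> = (\<chi> i. max 0 (\<phi>$i - q) / (\<Sum>j\<in>UNIV. max 0 (\<phi>$j - q)))"
proof -
  have "max 0 (Inv p q \<phi> $ i) = max 0 (\<phi>$i - q) / (p - q)" for i
    using assms by (simp add: Inv_def max_divide_distrib_right)
  then show ?thesis
    using assms by (simp add: InvN_def sum_divide_distrib[symmetric])
qed

lemma cfac_at_min_entry:
  assumes "\<phi> \<in> prob_simplex" "\<forall>i. \<phi>$m \<le> \<phi>$i"
  shows "cfac q \<phi> (\<phi>$m) = 1"
  using assms by (simp add: cfac_def mcount_def prob_simplex_def not_less[symmetric])

locale one_small_entry =
  fixes p q :: real and \<phi> :: "real^'n" and m :: 'n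
  assumes card_ge_2: "CARD('n) \<ge> 2"
    and q_pos: "0 < q" and q_less_p: "q < p"
    and p_q_sum: "p + (real CARD('n) - 1) * q = 1"
    and \<phi>_simplex: "\<phi> \<in> prob_simplex"
    and \<phi>_m_min: "\<forall>i. \<phi>$m \<le> \<phi>$i"
    and \<phi>_m_less_q: "\<phi>$m < q"
    and \<phi>_others_ge: "\<forall>i. i \<noteq> m \<longrightarrow> \<phi>$i \<ge> (real CARD('n) * q - \<phi>$m) / (real CARD('n) - 1)"
begin

lemma card_minus_one_pos: "real CARD('n) - 1 > 0"
  using card_ge_2 by simp

lemma p_minus_q_eq: "p - q = 1 - real CARD('n) * q"
  using p_q_sum by (simp add: algebra_simps)

lemma q_less_one: "q < 1"
  using p_q_sum q_less_p q_pos card_minus_one_pos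
  by (smt (verit) mult_pos_pos)

lemma q_less_entry: "i \<noteq> m \<Longrightarrow> q < \<phi>$i"
proof -
  assume "i \<noteq> m"
  have "q < (real CARD('n) * q - \<phi>$m) / (real CARD('n) - 1)"
    using \<phi>_m_less_q card_minus_one_pos by (simp add: field_simps)
  also have "\<dots> \<le> \<phi>$i"
    using \<phi>_others_ge \<open>i \<noteq> m\<close> by blast
  finally show ?thesis .
qed

lemma card_others: "real (card (- {m})) = real CARD('n) - 1"
  using card_ge_2 by (simp add: Compl_eq_Diff_UNIV card_Diff_singleton of_nat_diff)

lemma sum_others: "(\<Sum>i\<in>- {m}. \<phi>$i) = 1 - \<phi>$m"
  using \<phi>_simplex sum.remove[of UNIV m "\<lambda>i. \<phi>$i"]
  by (simp add: prob_simplex_def Compl_eq_Diff_UNIV)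

lemma sum_others_excess: "(\<Sum>i\<in>- {m}. \<phi>$i - q) = 1 - \<phi>$m - (real CARD('n) - 1) * q"
  by (simp add: sum_subtractf sum_others card_others)

lemma p_minus_q_less_excess: "p - q < 1 - \<phi>$m - (real CARD('n) - 1) * q"
  using \<phi>_m_less_q by (simp add: p_minus_q_eq algebra_simps)

lemma InvN_eq:
  "InvN p q \<phi> = (\<chi> i. if i = m then 0 else (\<phi>$i - q) / (1 - \<phi>$m - (real CARD('n) - 1) * q))"
proof -
  have excess: "max 0 (\<phi>$i - q) = (if i = m then 0 else \<phi>$i - q)" for i
    using \<phi>_m_less_q q_less_entry by auto
  have "(\<Sum>j\<in>UNIV. max 0 (\<phi>$j - q)) = (\<Sum>j\<in>- {m}. \<phi>$j - q)"
    unfolding excess sum.If_cases[OF finite] by (simp add: Compl_eq_Diff_UNIV)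
  then show ?thesis
    unfolding InvN_altdef[OF q_less_p] excess sum_others_excess by (simp add: vec_eq_iff)
qed

definition second_smallest :: real where
  "second_smallest = Min ((\<lambda>i. \<phi>$i) ` (- {m}))"

lemma second_smallest_mem: "second_smallest \<in> (\<lambda>i. \<phi>$i) ` (- {m})"
proof -
  have "- {m} \<noteq> {}"
    using card_others card_minus_one_pos by auto
  then show ?thesis
    unfolding second_smallest_def by (intro Min_in) auto
qed

lemma less_second_smallest_iff: "\<phi>$i < second_smallest \<longleftrightarrow> i = m"
proof -
  have "\<phi>$m < second_smallest"
    using second_smallest_mem \<phi>_m_less_q q_less_entry by fastforce
  moreover have "second_smallest \<le> \<phi>$i" if "i \<noteq> m"
    unfolding second_smallest_def using that by (intro Min_le) auto
  ultimately show ?thesis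
    by (metis not_less)
qed

lemma cfac_second_smallest: "cfac q \<phi> second_smallest = (1 - q) / (1 - \<phi>$m)"
proof -
  have "{i. \<phi>$i < second_smallest} = {m}" "{i. second_smallest \<le> \<phi>$i} = - {m}"
    using less_second_smallest_iff by (auto simp: not_less[symmetric])
  then show ?thesis
    by (simp add: cfac_def mcount_def sum_others)
qed

text \<open>With the lower bound on the other entries this reduces to
  \<open>(q - \<phi>$m) * (p - q) \<ge> 0\<close>.\<close>
lemma q_le_scaled_entry:
  assumes "i \<noteq> m"
  shows "q \<le> (1 - q) / (1 - \<phi>$m) * \<phi>$i"
proof -
  define k where "k = real CARD('n) - 1"
  have k_pos: "k > 0" and d: "p - q = 1 - (k + 1) * q"
    using card_minus_one_pos p_minus_q_eq by (simp_all add: k_def)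
  have "q * (1 - \<phi>$m) * k \<le> (1 - q) * ((k + 1) * q - \<phi>$m)"
  proof -
    have "(1 - q) * ((k + 1) * q - \<phi>$m) - q * (1 - \<phi>$m) * k = (q - \<phi>$m) * (p - q)"
      unfolding d by (simp add: algebra_simps)
    moreover have "(q - \<phi>$m) * (p - q) \<ge> 0"
      using \<phi>_m_less_q q_less_p by simp
    ultimately show ?thesis
      by linarith
  qed
  also have "\<dots> \<le> (1 - q) * (\<phi>$i * k)"
    using \<phi>_others_ge assms k_pos q_less_one by (simp add: k_def pos_divide_le_eq)
  finally have "q * (1 - \<phi>$m) \<le> (1 - q) * \<phi>$i"
    using k_pos by simp
  moreover have "1 - \<phi>$m > 0"
    using \<phi>_m_less_q q_less_one by simp
  ultimately show ?thesis
    by (simp add: field_simps)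
qed

lemma tau_star_eq: "tau_star q \<phi> = second_smallest"
  unfolding tau_star_def
proof (rule Min_eqI)
  show "second_smallest \<in> {\<tau> \<in> range (($) \<phi>). \<forall>i. \<tau> \<le> \<phi>$i \<longrightarrow> q \<le> cfac q \<phi> \<tau> * \<phi>$i}"
    using second_smallest_mem less_second_smallest_iff q_le_scaled_entry
    by (auto simp: cfac_second_smallest not_less[symmetric])
next
  fix \<tau> assume "\<tau> \<in> {\<tau> \<in> range (($) \<phi>). \<forall>i. \<tau> \<le> \<phi>$i \<longrightarrow> q \<le> cfac q \<phi> \<tau> * \<phi>$i}"
  then obtain j where j: "\<tau> = \<phi>$j" and admissible: "\<forall>i. \<tau> \<le> \<phi>$i \<longrightarrow> q \<le> cfac q \<phi> \<tau> * \<phi>$i"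
    by auto
  have "j \<noteq> m"
  proof
    assume "j = m"
    then have "q \<le> \<phi>$m"
      using admissible j \<phi>_m_min cfac_at_min_entry[OF \<phi>_simplex \<phi>_m_min] by auto
    with \<phi>_m_less_q show False by simp
  qed
  then show "second_smallest \<le> \<tau>"
    using j less_second_smallest_iff not_less by blast
qed simp

lemma MLE_star_eq:
  "MLE_star p q \<phi> = (\<chi> i. if i = m then 0 else ((1 - q) / (1 - \<phi>$m) * \<phi>$i - q) / (p - q))"
  unfolding MLE_star_def tau_star_eq cfac_second_smallest less_second_smallest_iff ..

text \<open>The shift \<open>s\<close> spreads the deficit of the truncated coordinate \<open>m\<close> evenly over
  the other \<open>K - 1\<close> coordinates; the lower bound on the other entries keeps them
  nonnegative.\<close>
lemma InvP_eq:
  "InvP p q \<phi> = (\<chi> i. if i = m then 0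
     else (\<phi>$i - q) / (p - q) + (\<phi>$m - q) / ((p - q) * (real CARD('n) - 1)))"
proof -
  define k where "k = real CARD('n) - 1"
  define d where "d = p - q"
  define s where "s = (\<phi>$m - q) / (d * k)"
  have k_pos: "k > 0" and d_pos: "d > 0"
    using card_minus_one_pos q_less_p by (simp_all add: k_def d_def)
  have Inv_eq: "Inv p q \<phi> $ i = (\<phi>$i - q) / d" for i
    by (simp add: Inv_def d_def)
  have shifted: "max 0 (Inv p q \<phi> $ i + s) = (if i = m then 0 else (\<phi>$i - q) / d + s)" for i
  proof (cases "i = m")
    case True
    have "Inv p q \<phi> $ m + s < 0"
      using \<phi>_m_less_q d_pos k_pos
      by (simp add: Inv_eq s_def divide_neg_pos add_neg_neg)
    with True show ?thesis by simp
  next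
    case False
    have "(k + 1) * q - \<phi>$m \<le> \<phi>$i * k"
      using \<phi>_others_ge False k_pos by (simp add: k_def pos_divide_le_eq)
    then have "0 \<le> ((\<phi>$i - q) * k + (\<phi>$m - q)) / (d * k)"
      using d_pos k_pos by (simp add: algebra_simps)
    also have "\<dots> = (\<phi>$i - q) / d + s"
      using d_pos k_pos by (simp add: s_def field_simps)
    finally show ?thesis
      using False by (simp add: Inv_eq)
  qed
  have "(\<Sum>i\<in>UNIV. max 0 (Inv p q \<phi> $ i + s)) = (\<Sum>i\<in>- {m}. (\<phi>$i - q) / d + s)"
    unfolding shifted sum.If_cases[OF finite] by (simp add: Compl_eq_Diff_UNIV)
  also have "\<dots> = (1 - \<phi>$m - k * q) / d + k * s"
    by (simp add: sum.distrib sum_divide_distrib[symmetric] sum_others_excess card_others k_def)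
  also have "\<dots> = (1 - (k + 1) * q) / d"
    using d_pos k_pos by (simp add: s_def field_simps)
  also have "\<dots> = 1"
    using d_pos p_minus_q_eq by (simp add: k_def d_def)
  finally have "closest_point prob_simplex (Inv p q \<phi>) = (\<chi> i. max 0 (Inv p q \<phi> $ i + s))"
    by (rule closest_point_prob_simplex)
  then have "InvP p q \<phi> = (\<chi> i. if i = m then 0 else (\<phi>$i - q) / d + s)"
    unfolding InvP_def shifted .
  then show ?thesis
    by (simp only: s_def k_def d_def)
qed

lemma MLE_star_convex_combination:
  defines "t \<equiv> (1 - \<phi>$m - (real CARD('n) - 1) * q) / (1 - \<phi>$m)"
  shows "MLE_star p q \<phi> = (1 - t) *\<^sub>R InvP p q \<phi> + t *\<^sub>R InvN p q \<phi>"
proof -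
  define k where "k = real CARD('n) - 1"
  define u where "u = 1 - \<phi>$m"
  define S where "S = u - k * q"
  define d where "d = p - q"
  have k_pos: "k > 0" and d_pos: "d > 0" and u_pos: "u > 0" and S_pos: "S > 0"
    using card_minus_one_pos q_less_p \<phi>_m_less_q q_less_one p_minus_q_less_excess
    by (simp_all add: k_def d_def u_def S_def)
  have d_eq: "d = 1 - (k + 1) * q"
    using p_minus_q_eq by (simp add: d_def k_def algebra_simps)
  have "((1 - q) / u * x - q) / d
      = (1 - S/u) * ((x - q) / d + (\<phi>$m - q) / (d * k)) + S/u * ((x - q) / S)" for x
  proof -
    have "(1 - S/u) * ((x - q) / d + (\<phi>$m - q) / (d * k)) + S/u * ((x - q) / S)
        = ((u - S) * ((x - q) * k + (\<phi>$m - q)) + k * d * (x - q)) / (u * d * k)"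
      using k_pos d_pos u_pos S_pos by (simp add: field_simps)
    also have "\<dots> = (((1 - q) * x - q * u) * k) / (u * d * k)"
      unfolding d_eq S_def u_def by (simp add: algebra_simps)
    also have "\<dots> = ((1 - q) / u * x - q) / d"
      using k_pos d_pos u_pos by (simp add: field_simps)
    finally show ?thesis ..
  qed
  then show ?thesis
    by (simp add: MLE_star_eq InvP_eq InvN_eq vec_eq_iff t_def k_def u_def S_def d_def)
qed

lemma MLE_star_between: "between (InvP p q \<phi>, InvN p q \<phi>) (MLE_star p q \<phi>)"
proof -
  define t where "t = (1 - \<phi>$m - (real CARD('n) - 1) * q) / (1 - \<phi>$m)"
  have "0 \<le> t" "t \<le> 1"
    using p_minus_q_less_excess q_less_p q_pos card_minus_one_pos \<phi>_m_less_q q_less_one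
    by (auto simp: t_def field_simps)
  then show ?thesis
    using MLE_star_convex_combination
    unfolding between_mem_segment closed_segment_def t_def by blast
qed

end

theorem theorem2:
  fixes \<phi> :: "real^'n" and p q :: real and m :: 'n
  assumes "CARD('n) \<ge> 2"
    and "0 < q" and "q < p" and "p + (real CARD('n) - 1) * q = 1"
    and "\<phi> \<in> prob_simplex"
    and "\<forall>i. \<phi>$m \<le> \<phi>$i"
    and "\<phi>$m < q"
    and "\<forall>i. i \<noteq> m \<longrightarrow> \<phi>$i \<ge> (real CARD('n) * q - \<phi>$m) / (real CARD('n) - 1)"
  shows "collinear {InvP p q \<phi>, MLE_star p q \<phi>, InvN p q \<phi>}
    \<and> between (InvP p q \<phi>, InvN p q \<phi>) (MLE_star p q \<phi>)"
proof -
  interpret one_small_entry p q \<phi> m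
    using assms by unfold_locales
  show ?thesis
    using MLE_star_between between_imp_collinear by blast
qed

end
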